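(* Let $f(x)=\frac12x^\top Ax$ with $A\in\mathbb{R}^{d\times d}$ symmetric, $\eta>0$, and let $(x_k,v_k)$ be the leapfrog iterates from $(x_0,v_0)$: $v_{k+1/2}=v_k-\frac\eta2\nabla f(x_k)$, $x_{k+1}=x_k+\eta v_{k+1/2}$, $v_{k+1}=v_{k+1/2}-\frac\eta2\nabla f(x_{k+1})$. Then for every $k\ge0$, $$x_k=\Big(\sum_{j=0}^kD_{j,k}(\eta^2A)^j\Big)x_0+\eta\Big(\sum_{j=0}^{k-1}E_{j,k}(\eta^2A)^j\Big)v_0,$$ where $D_{j,k}=(-1)^j\frac{k}{k+j}\binom{k+j}{2j}$ (with $D_{0,0}=1$) and $E_{j,k}=(-1)^j\binom{k+j}{2j+1}$. *)

theory Defs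
  imports "HOL-Analysis.Analysis"
begin

primrec matpow :: "real^'n^'n \<Rightarrow> nat \<Rightarrow> real^'n^'n" where
  "matpow M 0 = mat 1"
| "matpow M (Suc j) = M ** matpow M j"

fun leapfrog :: "('a::real_vector \<Rightarrow> 'a) \<Rightarrow> real \<Rightarrow> 'a \<Rightarrow> 'a \<Rightarrow> nat \<Rightarrow> 'a \<times> 'a" where
  "leapfrog g eta x0 v0 0 = (x0, v0)"
| "leapfrog g eta x0 v0 (Suc k) =
     (let (x, v) = leapfrog g eta x0 v0 k;
          vh = v - (eta / 2) *\<^sub>R g x;
          x' = x + eta *\<^sub>R vh;
          v' = vh - (eta / 2) *\<^sub>R g x'
      in (x', v'))"

definition Dcoef :: "nat \<Rightarrow> nat \<Rightarrow> real" where
  "Dcoef j k = (if j = 0 \<and> k = 0 then 1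
               else (-1) ^ j * (real k / real (k + j)) * real ((k + j) choose (2 * j)))"

definition Ecoef :: "nat \<Rightarrow> nat \<Rightarrow> real" where
  "Ecoef j k = (-1) ^ j * real ((k + j) choose (2 * j + 1))"

end

theory Submission
  imports Defs
begin

(* Eliminating the velocities, leapfrog is the Stoermer-Verlet scheme
   x_{k+2} - 2 x_{k+1} + x_k = -eta^2 grad f (x_{k+1}), which for the quadratic f is the linear
   recurrence x_{k+2} = (2I - B) x_{k+1} - x_k with B = eta^2 A.  Read as polynomials in B, the
   claimed right-hand side obeys the same recurrence, because both coefficient families satisfy
   c_{j,k+2} = 2 c_{j,k+1} - c_{j-1,k+1} - c_{j,k}, a consequence of Pascal's rule; and the two
   sides agree for k = 0 and k = 1. *)

lemma fst_leapfrog_Suc_Suc: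
  "fst (leapfrog g eta x0 v0 (Suc (Suc k))) =
     2 *\<^sub>R fst (leapfrog g eta x0 v0 (Suc k))
     - eta\<^sup>2 *\<^sub>R g (fst (leapfrog g eta x0 v0 (Suc k)))
     - fst (leapfrog g eta x0 v0 k)"
proof -
  obtain x v where xv: "leapfrog g eta x0 v0 k = (x, v)" by fastforce
  define vh where "vh = v - (eta / 2) *\<^sub>R g x"
  define x' where "x' = x + eta *\<^sub>R vh"
  have step: "leapfrog g eta x0 v0 (Suc k) = (x', vh - (eta / 2) *\<^sub>R g x')"
    using xv by (simp add: Let_def vh_def x'_def)
  have x: "x = x' - eta *\<^sub>R vh"
    by (simp add: x'_def)
  have "fst (leapfrog g eta x0 v0 (Suc (Suc k))) =
      x' + eta *\<^sub>R (vh - (eta / 2) *\<^sub>R g x' - (eta / 2) *\<^sub>R g x')"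
    by (simp only: leapfrog.simps(2)[of g eta x0 v0 "Suc k"] step) (simp add: Let_def)
  also have "\<dots> = 2 *\<^sub>R x' - eta\<^sup>2 *\<^sub>R g x' - x"
    by (simp add: x algebra_simps power2_eq_square scaleR_2 flip: scaleR_left_distrib)
  finally show ?thesis
    unfolding step xv fst_conv .
qed

lemma fst_leapfrog_1:
  "fst (leapfrog g eta x0 v0 1) = x0 + eta *\<^sub>R v0 - (eta\<^sup>2 / 2) *\<^sub>R g x0"
  by (simp add: Let_def scaleR_diff_right power2_eq_square add_diff_eq)

lemma gderiv_unique:
  assumes "GDERIV f x :> D" and "GDERIV f x :> E"
  shows "D = E"
proof -
  have "(\<lambda>h. h \<bullet> D) = (\<lambda>h. h \<bullet> E)"
    using assms unfolding gderiv_def by (rule has_derivative_unique)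
  then have "(D - E) \<bullet> (D - E) = 0"
    by (metis inner_diff_right right_minus_eq)
  then show ?thesis by simp
qed

lemma gderiv_quadratic_form:
  fixes A :: "real^'n^'n"
  assumes "transpose A = A"
  shows "GDERIV (\<lambda>x. (1/2) * (x \<bullet> (A *v x))) x :> A *v x"
proof -
  have sym: "x \<bullet> (A *v h) = h \<bullet> (A *v x)" for h
    by (metis assms dot_lmul_matrix inner_commute vector_transpose_matrix)
  have lin: "bounded_linear (\<lambda>h. A *v h)"
    by (simp add: linear_conv_bounded_linear)
  have "((\<lambda>y. y \<bullet> (A *v y)) has_derivative (\<lambda>h. x \<bullet> (A *v h) + h \<bullet> (A *v x))) (at x)"
    by (intro has_derivative_inner has_derivative_ident bounded_linear.has_derivative[OF lin])
  then have "((\<lambda>y. (1/2) * (y \<bullet> (A *v y))) has_derivative (\<lambda>h. (1/2) * (x \<bullet> (A *v h) + h \<bullet> (A *v x)))) (at x)"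
    by (rule has_derivative_mult_right)
  then show ?thesis
    unfolding gderiv_def sym by simp
qed

lemma binomial_second_difference:
  "real (Suc (Suc n) choose Suc (Suc m)) =
     2 * real (Suc n choose Suc (Suc m)) - real (n choose Suc (Suc m)) + real (n choose m)"
proof -
  have "(Suc (Suc n) choose Suc (Suc m)) + (n choose Suc (Suc m)) =
        2 * (Suc n choose Suc (Suc m)) + (n choose m)"
    by simp
  then have "real (Suc (Suc n) choose Suc (Suc m)) + real (n choose Suc (Suc m)) =
        2 * real (Suc n choose Suc (Suc m)) + real (n choose m)"
    by (metis of_nat_add of_nat_mult of_nat_numeral)
  then show ?thesis
    by linarith
qed

lemma Dcoef_0: "Dcoef 0 k = 1"
  by (simp add: Dcoef_def)

lemma Ecoef_0: "Ecoef 0 k = real k"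
  by (simp add: Ecoef_def)

lemma Dcoef_eq_0: "k < j \<Longrightarrow> Dcoef j k = 0"
  by (simp add: Dcoef_def binomial_eq_0)

lemma Ecoef_eq_0: "k \<le> j \<Longrightarrow> Ecoef j k = 0"
  by (simp add: Ecoef_def binomial_eq_0)

(* For k = j = 0 this relies on the truncated subtraction 0 - 1 = 0. *)
lemma Dcoef_conv_choose:
  "Dcoef j k = (-1) ^ j * (real ((k + j) choose (2 * j)) + real ((k + j - 1) choose (2 * j))) / 2"
proof (cases "k = 0")
  case True
  then show ?thesis
    by (cases j) (auto simp: Dcoef_def binomial_eq_0)
next
  case False
  have absorb: "(real k - real j) * real ((k + j) choose (2 * j)) =
      real (k + j) * real ((k + j - 1) choose (2 * j))"
  proof (cases "j \<le> k")
    case True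
    have "real (k + j - 2 * j) * real ((k + j) choose (2 * j)) =
        real (k + j) * real ((k + j - 1) choose (2 * j))"
      by (metis binomial_absorb_comp of_nat_mult)
    with True show ?thesis
      by simp
  next
    case False
    with \<open>k \<noteq> 0\<close> show ?thesis
      by (simp add: binomial_eq_0)
  qed
  from False have "Dcoef j k = (-1) ^ j * (real k / real (k + j) * real ((k + j) choose (2 * j)))"
    by (simp add: Dcoef_def)
  also have "\<dots> = (-1) ^ j * (real ((k + j) choose (2 * j)) + real ((k + j - 1) choose (2 * j))) / 2"
    using absorb False by (simp add: field_simps)
  finally show ?thesis .
qed

lemma Dcoef_Suc_Suc:
  "Dcoef (Suc j) (Suc (Suc k)) = 2 * Dcoef (Suc j) (Suc k) - Dcoef j (Suc k) - Dcoef (Suc j) k"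
  using arg_cong[where f="\<lambda>t. (-1) ^ j * t", OF binomial_second_difference[of "k + j + 1" "2 * j"]]
    arg_cong[where f="\<lambda>t. (-1) ^ j * t", OF binomial_second_difference[of "k + j" "2 * j"]]
  by (simp add: Dcoef_conv_choose field_simps del: binomial_Suc_Suc)

lemma Ecoef_Suc_Suc:
  "Ecoef (Suc j) (Suc (Suc k)) = 2 * Ecoef (Suc j) (Suc k) - Ecoef j (Suc k) - Ecoef (Suc j) k"
  using arg_cong[where f="\<lambda>t. (-1) ^ j * t", OF binomial_second_difference[of "k + j + 1" "2 * j + 1"]]
  by (simp add: Ecoef_def algebra_simps del: binomial_Suc_Suc)

definition matrix_poly :: "(nat \<Rightarrow> real) \<Rightarrow> nat \<Rightarrow> real^'n^'n \<Rightarrow> real^'n^'n" where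
  "matrix_poly c n B = (\<Sum>j\<le>n. c j *\<^sub>R matpow B j)"

lemma matrix_poly_mult_vector:
  "matrix_poly c n B *v x = (\<Sum>j\<le>n. c j *\<^sub>R (matpow B j *v x))"
  unfolding matrix_poly_def
  by (induction n) (simp_all add: matrix_vector_mult_add_rdistrib flip: scaleR_matrix_vector_assoc)

lemma matrix_poly_extend:
  assumes "\<And>j. n < j \<Longrightarrow> c j = 0" and "n \<le> N"
  shows "matrix_poly c N B = matrix_poly c n B"
  unfolding matrix_poly_def
  by (rule sum.mono_neutral_right) (use assms in auto)

lemma matrix_poly_shift_mult_vector:
  "B *v (matrix_poly c n B *v x) = (\<Sum>j\<le>n. c j *\<^sub>R (matpow B (Suc j) *v x))"
  unfolding matrix_poly_mult_vector
  by (induction n) (simp_all add: matrix_vector_right_distrib matrix_vector_mult_scaleR matrix_vector_mul_assoc)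

lemma matrix_poly_three_term:
  fixes c :: "nat \<Rightarrow> nat \<Rightarrow> real" and B :: "real^'n^'n"
  assumes support: "\<And>k j. k < j \<Longrightarrow> c k j = 0"
    and rec_0: "\<And>k. c (Suc (Suc k)) 0 = 2 * c (Suc k) 0 - c k 0"
    and rec_Suc: "\<And>k j. c (Suc (Suc k)) (Suc j) = 2 * c (Suc k) (Suc j) - c (Suc k) j - c k (Suc j)"
  shows "matrix_poly (c (Suc (Suc k))) (Suc (Suc k)) B *v x =
    2 *\<^sub>R (matrix_poly (c (Suc k)) (Suc k) B *v x)
    - B *v (matrix_poly (c (Suc k)) (Suc k) B *v x)
    - matrix_poly (c k) k B *v x"
proof -
  define v where "v j = matpow B j *v x" for j
  define S where "S i = (\<Sum>j\<le>Suc (Suc k). c i j *\<^sub>R v j)" for i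
  have S: "matrix_poly (c i) i B *v x = S i" if "i \<le> Suc (Suc k)" for i
  proof -
    have "matrix_poly (c i) (Suc (Suc k)) B = matrix_poly (c i) i B"
      using support that by (rule matrix_poly_extend)
    then show ?thesis
      by (simp only: S_def v_def flip: matrix_poly_mult_vector)
  qed
  have shift: "B *v (matrix_poly (c (Suc k)) (Suc k) B *v x) = (\<Sum>j\<le>Suc k. c (Suc k) j *\<^sub>R v (Suc j))"
    by (simp add: matrix_poly_shift_mult_vector v_def)
  have "S (Suc (Suc k)) = c (Suc (Suc k)) 0 *\<^sub>R v 0 + (\<Sum>j\<le>Suc k. c (Suc (Suc k)) (Suc j) *\<^sub>R v (Suc j))"
    unfolding S_def by (rule sum.atMost_Suc_shift)
  also have "\<dots> = 2 *\<^sub>R S (Suc k) - B *v (matrix_poly (c (Suc k)) (Suc k) B *v x) - S k"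
    unfolding shift S_def sum.atMost_Suc_shift[of _ "Suc k"]
    by (simp add: rec_0 rec_Suc algebra_simps sum.distrib sum_subtractf scaleR_sum_right)
  finally show ?thesis
    by (simp add: S)
qed

lemma two_step_recurrence_unique:
  assumes "\<And>k. x (Suc (Suc k)) = F (x (Suc k)) (x k)"
    and "\<And>k. y (Suc (Suc k)) = F (y (Suc k)) (y k)"
    and "x 0 = y 0" and "x 1 = y 1"
  shows "x k = y k"
proof -
  have "x k = y k \<and> x (k + 1) = y (k + 1)"
    by (induction k) (use assms in simp_all)
  then show ?thesis ..
qed

definition leapfrog_poly :: "real^'n^'n \<Rightarrow> real \<Rightarrow> real^'n \<Rightarrow> real^'n \<Rightarrow> nat \<Rightarrow> real^'n" where
  "leapfrog_poly B eta x0 v0 k =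
     matrix_poly (\<lambda>j. Dcoef j k) k B *v x0 + eta *\<^sub>R (matrix_poly (\<lambda>j. Ecoef j k) k B *v v0)"

lemma leapfrog_poly_0: "leapfrog_poly B eta x0 v0 0 = x0"
  by (simp add: leapfrog_poly_def matrix_poly_def Dcoef_0 Ecoef_0)

lemma leapfrog_poly_1: "leapfrog_poly B eta x0 v0 1 = x0 + eta *\<^sub>R v0 - (1/2) *\<^sub>R (B *v x0)"
  by (simp add: leapfrog_poly_def matrix_poly_mult_vector Dcoef_def Ecoef_0 Ecoef_eq_0 numeral_2_eq_2)

lemma leapfrog_poly_Suc_Suc:
  "leapfrog_poly B eta x0 v0 (Suc (Suc k)) =
     2 *\<^sub>R leapfrog_poly B eta x0 v0 (Suc k) - B *v leapfrog_poly B eta x0 v0 (Suc k)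
     - leapfrog_poly B eta x0 v0 k"
proof -
  have D: "matrix_poly (\<lambda>j. Dcoef j (Suc (Suc k))) (Suc (Suc k)) B *v x0 =
      2 *\<^sub>R (matrix_poly (\<lambda>j. Dcoef j (Suc k)) (Suc k) B *v x0)
      - B *v (matrix_poly (\<lambda>j. Dcoef j (Suc k)) (Suc k) B *v x0)
      - matrix_poly (\<lambda>j. Dcoef j k) k B *v x0"
    by (rule matrix_poly_three_term) (simp_all add: Dcoef_0 Dcoef_eq_0 Dcoef_Suc_Suc)
  have E: "matrix_poly (\<lambda>j. Ecoef j (Suc (Suc k))) (Suc (Suc k)) B *v v0 =
      2 *\<^sub>R (matrix_poly (\<lambda>j. Ecoef j (Suc k)) (Suc k) B *v v0)
      - B *v (matrix_poly (\<lambda>j. Ecoef j (Suc k)) (Suc k) B *v v0)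
      - matrix_poly (\<lambda>j. Ecoef j k) k B *v v0"
    by (rule matrix_poly_three_term) (simp_all add: Ecoef_0 Ecoef_eq_0 Ecoef_Suc_Suc)
  show ?thesis
    unfolding leapfrog_poly_def D E by (simp add: algebra_simps)
qed

theorem lemma12:
  fixes A :: "real^'n^'n" and eta :: real and x0 v0 :: "real^'n"
    and f :: "real^'n \<Rightarrow> real" and g :: "real^'n \<Rightarrow> real^'n"
  assumes symA: "transpose A = A"
    and f_def: "\<And>x. f x = (1/2) * (x \<bullet> (A *v x))"
    and g_grad: "\<And>x. GDERIV f x :> g x"
    and eta_pos: "eta > 0"
  shows "\<forall>k. fst (leapfrog g eta x0 v0 k) =
           (\<Sum>j\<in>{0..k}. Dcoef j k *\<^sub>R matpow ((eta^2) *\<^sub>R A) j) *v x0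
           + eta *\<^sub>R ((\<Sum>j\<in>{0..<k}. Ecoef j k *\<^sub>R matpow ((eta^2) *\<^sub>R A) j) *v v0)"
proof -
  define B where "B = eta\<^sup>2 *\<^sub>R A"
  have "f = (\<lambda>x. (1/2) * (x \<bullet> (A *v x)))"
    using f_def by blast
  then have "g x = A *v x" for x
    using g_grad gderiv_quadratic_form[OF symA] by (metis gderiv_unique)
  then have B_mult: "eta\<^sup>2 *\<^sub>R g x = B *v x" for x
    by (simp add: B_def scaleR_matrix_vector_assoc)
  have leapfrog_eq: "fst (leapfrog g eta x0 v0 k) = leapfrog_poly B eta x0 v0 k" for k
  proof (rule two_step_recurrence_unique)
    show "fst (leapfrog g eta x0 v0 (Suc (Suc k))) =
        2 *\<^sub>R fst (leapfrog g eta x0 v0 (Suc k)) - B *v fst (leapfrog g eta x0 v0 (Suc k))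
        - fst (leapfrog g eta x0 v0 k)" for k
      unfolding B_mult[symmetric] by (rule fst_leapfrog_Suc_Suc)
    show "fst (leapfrog g eta x0 v0 1) = leapfrog_poly B eta x0 v0 1"
      unfolding fst_leapfrog_1 leapfrog_poly_1 B_mult[symmetric] by simp
  qed (simp_all add: leapfrog_poly_0 leapfrog_poly_Suc_Suc)
  have E_range: "matrix_poly (\<lambda>j. Ecoef j k) k B = (\<Sum>j\<in>{0..<k}. Ecoef j k *\<^sub>R matpow B j)" for k
    by (simp add: matrix_poly_def Ecoef_eq_0 atLeast0LessThan flip: lessThan_Suc_atMost)
  show ?thesis
    using leapfrog_eq E_range by (simp add: leapfrog_poly_def B_def matrix_poly_def atLeast0AtMost)
qed

end
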